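(* Let $E$ be a finite-dimensional real affine space. An extended-real-valued function $h:E\to\overline{\mathbb{R}}$ is generalized affine if and only if one of the following holds: (a) $h(x)=+\infty$ for all $x\in E$; (b) $h(x)=-\infty$ for all $x\in E$; (c) $h$ is real-valued on all of $E$ and is an affine function; or (d) there is a hyperplane $H$ in $E$ such that $h(x)=+\infty$ for all points on one (open) side of $H$, $h(x)=-\infty$ for all points on the other side of $H$, and the restriction of $h$ to $H$ is a generalized affine function on $H$.
   Context: $\overline{\mathbb{R}}=\mathbb{R}\cup\{-\infty,+\infty\}$. A generalized affine function on an affine space is an extended-real-valued function that is both convex and concave in the sense of extended-real-valued convex analysis (convex: epigraph convex; concave: hypograph convex). *)

theory Defs
  imports "HOL-Analysis.Analysis" "HOL-Library.Extended_Real"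
begin

definition epi_on :: "'a set \<Rightarrow> ('a \<Rightarrow> ereal) \<Rightarrow> ('a \<times> real) set" where
  "epi_on A h = {(x, t). x \<in> A \<and> h x \<le> ereal t}"

definition hypo_on :: "'a set \<Rightarrow> ('a \<Rightarrow> ereal) \<Rightarrow> ('a \<times> real) set" where
  "hypo_on A h = {(x, t). x \<in> A \<and> ereal t \<le> h x}"

definition gen_affine_on :: "'a::real_vector set \<Rightarrow> ('a \<Rightarrow> ereal) \<Rightarrow> bool" where
  "gen_affine_on A h \<longleftrightarrow> affine A \<and> convex (epi_on A h) \<and> convex (hypo_on A h)"

definition affine_fun :: "('a::real_vector \<Rightarrow> real) \<Rightarrow> bool" where
  "affine_fun f \<longleftrightarrow> (\<exists>l c. linear l \<and> (\<forall>x. f x = l x + c))"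

end

(* Along a segment, the value -\<infinity> of a function with convex epigraph at one end
   absorbs every value < \<infinity> at the other end; dually for \<infinity> and the hypograph,
   which is the reflected epigraph of -h. Hence {h = -\<infinity>} and {h = \<infinity>} are
   convex. If h is finite, it is convex and concave, hence affine. If only one
   infinite value occurs, reflecting through an arbitrary point c shows that h c
   is that value. If both occur, a hyperplane separates the two convex sets, and
   every point of an open side lies strictly between a point carrying the
   opposite infinity and another point of that side, so absorption fixes h there.
   Conversely, a proper convex combination of two points of a closed half-space
   lies on its boundary hyperplane only if both points do, so convexity needs to
   be checked only on the hyperplane. *)

theory Submission
  imports Defs
begin

lemma convex_epi_onD:
  assumes "convex (epi_on A h)" "x \<in> A" "y \<in> A" "0 \<le> u" "0 \<le> v" "u + v = 1"
    and "h x \<le> ereal s" "h y \<le> ereal t"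
  shows "h (u *\<^sub>R x + v *\<^sub>R y) \<le> ereal (u * s + v * t)"
  using convexD[OF assms(1), of "(x, s)" "(y, t)" u v] assms by (simp add: epi_on_def)

lemma convex_epi_onI:
  assumes "convex A"
    and "\<And>x y u v s t. x \<in> A \<Longrightarrow> y \<in> A \<Longrightarrow> 0 \<le> u \<Longrightarrow> 0 \<le> v \<Longrightarrow> u + v = 1 \<Longrightarrow>
      h x \<le> ereal s \<Longrightarrow> h y \<le> ereal t \<Longrightarrow> h (u *\<^sub>R x + v *\<^sub>R y) \<le> ereal (u * s + v * t)"
  shows "convex (epi_on A h)"
  using assms unfolding convex_def epi_on_def by auto

lemma convex_hypo_on_iff: "convex (hypo_on A h) \<longleftrightarrow> convex (epi_on A (\<lambda>x. - h x))"
proof -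
  let ?flip = "\<lambda>z::'a \<times> real. (fst z, - snd z)"
  have lin: "linear ?flip"
    by (auto intro!: linearI)
  have "?flip ` hypo_on A h = epi_on A (\<lambda>x. - h x)"
    by (auto simp: epi_on_def hypo_on_def ereal_uminus_le_reorder intro: rev_image_eqI[of "(_, - _)"])
  moreover have "?flip ` ?flip ` S = S" for S
    by (force simp: image_image)
  ultimately have "hypo_on A h = ?flip ` epi_on A (\<lambda>x. - h x)"
    "epi_on A (\<lambda>x. - h x) = ?flip ` hypo_on A h"
    by metis+
  then show ?thesis
    using convex_linear_image[OF lin] by metis
qed

lemma gen_affine_on_subset:
  assumes "gen_affine_on A h" "affine B" "B \<subseteq> A"
  shows "gen_affine_on B h"
proof -
  have "epi_on B h = epi_on A h \<inter> (B \<times> UNIV)" "hypo_on B h = hypo_on A h \<inter> (B \<times> UNIV)"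
    using \<open>B \<subseteq> A\<close> by (auto simp: epi_on_def hypo_on_def)
  then show ?thesis
    using assms by (auto simp: gen_affine_on_def affine_imp_convex intro!: convex_Int convex_Times)
qed

lemma linear_if_convex_combinations:
  fixes l :: "'a::real_vector \<Rightarrow> real"
  assumes l0: "l 0 = 0"
    and comb: "\<And>x y u. 0 \<le> u \<Longrightarrow> u \<le> 1 \<Longrightarrow> l (u *\<^sub>R x + (1 - u) *\<^sub>R y) = u * l x + (1 - u) * l y"
  shows "linear l"
proof -
  have scale_le_1: "l (c *\<^sub>R x) = c * l x" if "0 \<le> c" "c \<le> 1" for c x
    using comb[OF that, of x 0] l0 by simp
  have scale_nonneg: "l (c *\<^sub>R x) = c * l x" if "0 \<le> c" for c x
  proof (cases "c \<le> 1")
    case False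
    have "l x = (1 / c) * l (c *\<^sub>R x)"
      using scale_le_1[of "1 / c" "c *\<^sub>R x"] False by simp
    then show ?thesis
      using False by (simp add: field_simps)
  qed (use that scale_le_1 in auto)
  have minus: "l (- x) = - l x" for x
    using comb[of "1/2" x "- x"] l0 by simp
  have scale: "l (c *\<^sub>R x) = c * l x" for c x
    using scale_nonneg[of c x] scale_nonneg[of "- c" x] minus[of "(- c) *\<^sub>R x"]
    by (cases "0 \<le> c") auto
  have add: "l (x + y) = l x + l y" for x y
    using scale[of 2 "(1/2) *\<^sub>R x + (1 - 1/2) *\<^sub>R y"] comb[of "1/2" x y]
    by (simp add: scaleR_add_right)
  show ?thesis
    by (rule linearI) (simp_all add: add scale)
qed

lemma affine_fun_iff_convex_concave:
  fixes f :: "'a::real_vector \<Rightarrow> real"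
  shows "affine_fun f \<longleftrightarrow> convex_on UNIV f \<and> concave_on UNIV f"
proof
  assume "affine_fun f"
  then obtain l c where l: "linear l" and f: "\<And>x. f x = l x + c"
    by (auto simp: affine_fun_def)
  have "f (u *\<^sub>R x + v *\<^sub>R y) = u * f x + v * f y" if "u + v = 1" for u v x y
  proof -
    have "f (u *\<^sub>R x + v *\<^sub>R y) = u * l x + v * l y + (u + v) * c"
      using that by (simp add: f linear_add[OF l] linear_scale[OF l])
    then show ?thesis
      by (simp add: f algebra_simps)
  qed
  then show "convex_on UNIV f \<and> concave_on UNIV f"
    by (simp add: convex_on_def concave_on_iff)
next
  assume "convex_on UNIV f \<and> concave_on UNIV f"
  then have comb: "f (u *\<^sub>R x + (1 - u) *\<^sub>R y) = u * f x + (1 - u) * f y"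
    if "0 \<le> u" "u \<le> 1" for u x y
    using that by (intro antisym) (auto simp: convex_on_def concave_on_iff)
  have "linear (\<lambda>x. f x - f 0)"
    using comb by (intro linear_if_convex_combinations) (simp_all add: algebra_simps)
  then show "affine_fun f"
    unfolding affine_fun_def by (metis diff_add_cancel)
qed

lemma gen_affine_on_ereal_iff: "gen_affine_on UNIV (\<lambda>x. ereal (f x)) \<longleftrightarrow> affine_fun f"
proof -
  have "epi_on UNIV (\<lambda>x. ereal (f x)) = epigraph UNIV f"
    "epi_on UNIV (\<lambda>x. - ereal (f x)) = epigraph UNIV (\<lambda>x. - f x)"
    by (auto simp: epi_on_def epigraph_def)
  then show ?thesis
    by (simp add: gen_affine_on_def convex_hypo_on_iff convex_epigraph concave_on_def
        affine_fun_iff_convex_concave)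
qed

lemma convex_epi_on_minf_combination:
  assumes "convex (epi_on UNIV h)" "h x = -\<infinity>" "h y < \<infinity>" "0 < u" "0 \<le> v" "u + v = 1"
  shows "h (u *\<^sub>R x + v *\<^sub>R y) = -\<infinity>"
proof (rule ereal_bot)
  fix r
  obtain t where t: "h y \<le> ereal t"
    using \<open>h y < \<infinity>\<close> by (cases "h y") auto
  have "h x \<le> ereal ((r - v * t) / u)"
    using \<open>h x = -\<infinity>\<close> by simp
  then have "h (u *\<^sub>R x + v *\<^sub>R y) \<le> ereal (u * ((r - v * t) / u) + v * t)"
    using assms(1,4-6) t by (intro convex_epi_onD) auto
  then show "h (u *\<^sub>R x + v *\<^sub>R y) \<le> ereal r"
    using \<open>0 < u\<close> by simp
qed

lemma convex_hypo_on_pinf_combination: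
  assumes "convex (hypo_on UNIV h)" "h x = \<infinity>" "h y > -\<infinity>" "0 < u" "0 \<le> v" "u + v = 1"
  shows "h (u *\<^sub>R x + v *\<^sub>R y) = \<infinity>"
  using convex_epi_on_minf_combination[of "\<lambda>x. - h x" x y u v] assms
  by (simp add: convex_hypo_on_iff ereal_uminus_reorder)

lemma convex_epi_on_minf_set:
  assumes "convex (epi_on UNIV h)"
  shows "convex {x. h x = -\<infinity>}"
proof (rule convexI)
  fix x y and u v :: real
  assume "x \<in> {x. h x = -\<infinity>}" "y \<in> {x. h x = -\<infinity>}" "0 \<le> u" "0 \<le> v" "u + v = 1"
  then show "u *\<^sub>R x + v *\<^sub>R y \<in> {x. h x = -\<infinity>}"
    using convex_epi_on_minf_combination[OF assms, of x y u v]
    by (cases "u = 0") auto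
qed

lemma convex_hypo_on_pinf_set:
  assumes "convex (hypo_on UNIV h)"
  shows "convex {x. h x = \<infinity>}"
  using convex_epi_on_minf_set[of "\<lambda>x. - h x"] assms
  by (simp add: convex_hypo_on_iff ereal_uminus_reorder)

lemma convex_epi_on_minf_everywhere:
  assumes "convex (epi_on UNIV h)" "h q = -\<infinity>" "\<And>x. h x \<noteq> \<infinity>"
  shows "h c = -\<infinity>"
proof -
  have "c = (1/2) *\<^sub>R q + (1/2) *\<^sub>R (2 *\<^sub>R c - q)"
    by (simp add: algebra_simps)
  then show ?thesis
    using convex_epi_on_minf_combination[OF assms(1,2), of "2 *\<^sub>R c - q" "1/2" "1/2"] assms(3)
    by (simp add: less_top)
qed

lemma convex_hypo_on_pinf_everywhere:
  assumes "convex (hypo_on UNIV h)" "h p = \<infinity>" "\<And>x. h x \<noteq> -\<infinity>"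
  shows "h c = \<infinity>"
  using convex_epi_on_minf_everywhere[of "\<lambda>x. - h x" p c] assms
  by (simp add: convex_hypo_on_iff ereal_uminus_reorder)

lemma open_segment_extension:
  fixes x p :: "'a::real_normed_vector"
  assumes "open S" "x \<in> S"
  obtains u d where "0 < u" "u \<le> 1" "d \<in> S" "x = u *\<^sub>R p + (1 - u) *\<^sub>R d"
proof -
  have "((\<lambda>s. x + s *\<^sub>R (x - p)) \<longlongrightarrow> x + 0 *\<^sub>R (x - p)) (at_right 0)"
    by (intro tendsto_intros)
  then have "((\<lambda>s. x + s *\<^sub>R (x - p)) \<longlongrightarrow> x) (at_right 0)"
    by simp
  then have "\<forall>\<^sub>F s in at_right 0. x + s *\<^sub>R (x - p) \<in> S"
    using assms topological_tendstoD by blast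
  then have "\<forall>\<^sub>F s in at_right (0::real). 0 < s \<and> x + s *\<^sub>R (x - p) \<in> S"
    using eventually_at_right_less by (rule eventually_conj[rotated])
  then obtain s where s: "0 < s" "x + s *\<^sub>R (x - p) \<in> S"
    using eventually_happens trivial_limit_at_right_real by blast
  define d where "d = x + s *\<^sub>R (x - p)"
  have d_eq: "(1 + s) *\<^sub>R x = s *\<^sub>R p + d"
    by (simp add: d_def algebra_simps)
  have "x = (1 / (1 + s)) *\<^sub>R ((1 + s) *\<^sub>R x)"
    using s(1) by simp
  also have "\<dots> = (s / (1 + s)) *\<^sub>R p + (1 - s / (1 + s)) *\<^sub>R d"
    using s(1) unfolding d_eq by (simp add: scaleR_add_right field_simps)
  finally show ?thesis
    using s d_def by (intro that) auto
qed

lemma convex_hypo_on_pinf_on_open: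
  fixes h :: "'a::real_normed_vector \<Rightarrow> ereal"
  assumes "convex (hypo_on UNIV h)" "h p = \<infinity>" "open S" "\<And>x. x \<in> S \<Longrightarrow> h x \<noteq> -\<infinity>" "x \<in> S"
  shows "h x = \<infinity>"
proof -
  obtain u d where "0 < u" "u \<le> 1" "d \<in> S" "x = u *\<^sub>R p + (1 - u) *\<^sub>R d"
    using open_segment_extension[OF assms(3,5)] .
  then show ?thesis
    using convex_hypo_on_pinf_combination[OF assms(1,2), of d u "1 - u"] assms(4)
    by simp
qed

lemma convex_epi_on_minf_on_open:
  fixes h :: "'a::real_normed_vector \<Rightarrow> ereal"
  assumes "convex (epi_on UNIV h)" "h q = -\<infinity>" "open S" "\<And>x. x \<in> S \<Longrightarrow> h x \<noteq> \<infinity>" "x \<in> S"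
  shows "h x = -\<infinity>"
  using convex_hypo_on_pinf_on_open[of "\<lambda>x. - h x" q S x] assms
  by (simp add: convex_hypo_on_iff ereal_uminus_reorder)

lemma inner_convex_combination_less:
  fixes a :: "'a::real_inner"
  assumes "a \<bullet> x \<le> b" "a \<bullet> y \<le> b" "a \<bullet> x < b \<or> a \<bullet> y < b" "0 < u" "0 < v" "u + v = 1"
  shows "a \<bullet> (u *\<^sub>R x + v *\<^sub>R y) < b"
proof -
  have "a \<bullet> (u *\<^sub>R x + v *\<^sub>R y) = u * (a \<bullet> x) + v * (a \<bullet> y)"
    by (simp add: inner_add_right)
  also have "\<dots> < u * b + v * b"
    using assms(3)
  proof
    assume "a \<bullet> x < b"
    then show ?thesis
      using assms by (intro add_less_le_mono) auto
  next
    assume "a \<bullet> y < b"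
    then show ?thesis
      using assms by (intro add_le_less_mono) auto
  qed
  also have "\<dots> = b"
    using \<open>u + v = 1\<close> by (metis distrib_right mult_1)
  finally show ?thesis .
qed

lemma convex_epi_on_glue_hyperplane:
  fixes a :: "'a::real_inner"
  assumes above: "\<And>x. a \<bullet> x > b \<Longrightarrow> h x = \<infinity>"
    and below: "\<And>x. a \<bullet> x < b \<Longrightarrow> h x = -\<infinity>"
    and hyperplane: "convex (epi_on {x. a \<bullet> x = b} h)"
  shows "convex (epi_on UNIV h)"
proof (rule convex_epi_onI[OF convex_UNIV])
  fix x y :: 'a and u v s t :: real
  assume "x \<in> UNIV" "y \<in> UNIV" and uv: "0 \<le> u" "0 \<le> v" "u + v = 1"
    and st: "h x \<le> ereal s" "h y \<le> ereal t"
  have le_b: "a \<bullet> z \<le> b" if "h z \<le> ereal r" for z r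
    using above that by (metis not_le PInfty_neq_ereal(1) ereal_infty_less_eq(1))
  consider (on) "a \<bullet> x = b" "a \<bullet> y = b" | (endpoint) "u = 0 \<or> v = 0"
    | (off) "a \<bullet> (u *\<^sub>R x + v *\<^sub>R y) < b"
    using inner_convex_combination_less[of a x b y u v] le_b[OF st(1)] le_b[OF st(2)] uv
    by fastforce
  then show "h (u *\<^sub>R x + v *\<^sub>R y) \<le> ereal (u * s + v * t)"
  proof cases
    case on
    then show ?thesis
      using convex_epi_onD[OF hyperplane _ _ uv st] by simp
  next
    case endpoint
    then show ?thesis
      using uv st by auto
  next
    case off
    then show ?thesis
      using below by simp
  qed
qed

lemma gen_affine_on_glue_hyperplane:
  fixes a :: "'a::real_inner"
  assumes "\<And>x. a \<bullet> x > b \<Longrightarrow> h x = \<infinity>" "\<And>x. a \<bullet> x < b \<Longrightarrow> h x = -\<infinity>"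
    and "gen_affine_on {x. a \<bullet> x = b} h"
  shows "gen_affine_on UNIV h"
proof -
  have "convex (epi_on UNIV h)"
    using assms by (intro convex_epi_on_glue_hyperplane[where a = a and b = b]) (auto simp: gen_affine_on_def)
  moreover have "convex (epi_on UNIV (\<lambda>x. - h x))"
  proof (rule convex_epi_on_glue_hyperplane[where a = "- a" and b = "- b"])
    show "convex (epi_on {x. (- a) \<bullet> x = - b} (\<lambda>x. - h x))"
      using assms(3) by (simp add: gen_affine_on_def convex_hypo_on_iff)
  qed (use assms(1,2) in auto)
  ultimately show ?thesis
    by (simp add: gen_affine_on_def convex_hypo_on_iff)
qed

lemma gen_affine_on_const_infinity:
  assumes "affine A" "c = \<infinity> \<or> c = -\<infinity>"
  shows "gen_affine_on A (\<lambda>_. c)"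
proof -
  have "epi_on A (\<lambda>_. c) = (if c = \<infinity> then {} else A \<times> UNIV)"
    "hypo_on A (\<lambda>_. c) = (if c = \<infinity> then A \<times> UNIV else {})"
    using assms(2) by (auto simp: epi_on_def hypo_on_def)
  then show ?thesis
    using assms(1) by (simp add: gen_affine_on_def affine_imp_convex convex_Times)
qed

lemma gen_affine_on_UNIV_hyperplane_split:
  fixes h :: "'a::euclidean_space \<Rightarrow> ereal"
  assumes G: "gen_affine_on UNIV h" and p: "h p = \<infinity>" and q: "h q = -\<infinity>"
  obtains a b where "a \<noteq> 0" "\<And>x. a \<bullet> x > b \<Longrightarrow> h x = \<infinity>" "\<And>x. a \<bullet> x < b \<Longrightarrow> h x = -\<infinity>"
    "gen_affine_on {x. a \<bullet> x = b} h"
proof -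
  have E: "convex (epi_on UNIV h)" and H: "convex (hypo_on UNIV h)"
    using G by (auto simp: gen_affine_on_def)
  have "{x. h x = -\<infinity>} \<noteq> {}" "{x. h x = \<infinity>} \<noteq> {}" "{x. h x = -\<infinity>} \<inter> {x. h x = \<infinity>} = {}"
    using p q by auto
  then obtain a b where a: "a \<noteq> 0"
    and minf: "\<forall>x\<in>{x. h x = -\<infinity>}. a \<bullet> x \<le> b" and pinf: "\<forall>x\<in>{x. h x = \<infinity>}. a \<bullet> x \<ge> b"
    using separating_hyperplane_sets[OF convex_epi_on_minf_set[OF E] convex_hypo_on_pinf_set[OF H]]
    by blast
  have "h x = \<infinity>" if "a \<bullet> x > b" for x
  proof (rule convex_hypo_on_pinf_on_open[OF H p open_halfspace_gt])
    show "x \<in> {x. b < a \<bullet> x}"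
      using that by simp
    show "h z \<noteq> -\<infinity>" if "z \<in> {x. b < a \<bullet> x}" for z
      using minf that by force
  qed
  moreover have "h x = -\<infinity>" if "a \<bullet> x < b" for x
  proof (rule convex_epi_on_minf_on_open[OF E q open_halfspace_lt])
    show "x \<in> {x. a \<bullet> x < b}"
      using that by simp
    show "h z \<noteq> \<infinity>" if "z \<in> {x. a \<bullet> x < b}" for z
      using pinf that by force
  qed
  moreover have "gen_affine_on {x. a \<bullet> x = b} h"
    using G by (rule gen_affine_on_subset) (auto simp: affine_hyperplane)
  ultimately show ?thesis
    using a that by blast
qed

lemma gen_affine_on_UNIV_cases:
  fixes h :: "'a::euclidean_space \<Rightarrow> ereal"
  assumes G: "gen_affine_on UNIV h"
  obtains "h = (\<lambda>_. \<infinity>)" | "h = (\<lambda>_. -\<infinity>)" | f where "affine_fun f" "h = (\<lambda>x. ereal (f x))"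
    | a b where "a \<noteq> 0" "\<And>x. a \<bullet> x > b \<Longrightarrow> h x = \<infinity>" "\<And>x. a \<bullet> x < b \<Longrightarrow> h x = -\<infinity>"
      "gen_affine_on {x. a \<bullet> x = b} h"
proof -
  have E: "convex (epi_on UNIV h)" and H: "convex (hypo_on UNIV h)"
    using G by (auto simp: gen_affine_on_def)
  consider p q where "h p = \<infinity>" "h q = -\<infinity>" | q where "h q = -\<infinity>" "\<And>x. h x \<noteq> \<infinity>"
    | p where "h p = \<infinity>" "\<And>x. h x \<noteq> -\<infinity>" | "\<And>x. \<bar>h x\<bar> \<noteq> \<infinity>"
    by (metis ereal_infinity_cases)
  then show ?thesis
  proof cases
    case 1
    then show ?thesis
      using gen_affine_on_UNIV_hyperplane_split[OF G] that(4) by metis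
  next
    case 2
    then show ?thesis
      using convex_epi_on_minf_everywhere[OF E] that(2) by blast
  next
    case 3
    then show ?thesis
      using convex_hypo_on_pinf_everywhere[OF H] that(1) by blast
  next
    case 4
    then have "h = (\<lambda>x. ereal (real_of_ereal (h x)))"
      by (simp add: ereal_real')
    then show ?thesis
      using G gen_affine_on_ereal_iff that(3) by metis
  qed
qed

theorem theorem1:
  fixes h :: "'a::euclidean_space \<Rightarrow> ereal"
  shows "gen_affine_on UNIV h \<longleftrightarrow>
    ((\<forall>x. h x = \<infinity>) \<or>
     (\<forall>x. h x = -\<infinity>) \<or>
     (\<exists>f. affine_fun f \<and> (\<forall>x. h x = ereal (f x))) \<or>
     (\<exists>a b. a \<noteq> 0 \<and>
        (\<forall>x. a \<bullet> x > b \<longrightarrow> h x = \<infinity>) \<and>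
        (\<forall>x. a \<bullet> x < b \<longrightarrow> h x = -\<infinity>) \<and>
        gen_affine_on {x. a \<bullet> x = b} h))"
  (is "_ \<longleftrightarrow> ?cases")
proof
  assume "gen_affine_on UNIV h"
  then show ?cases
  proof (cases rule: gen_affine_on_UNIV_cases)
    case (4 a b)
    then show ?thesis
      by (intro disjI2 exI[of _ a] exI[of _ b]) auto
  qed auto
next
  assume ?cases
  then show "gen_affine_on UNIV h"
  proof (elim disjE exE conjE)
    assume "\<forall>x. h x = \<infinity>"
    then have "h = (\<lambda>_. \<infinity>)"
      by auto
    then show ?thesis
      by (simp add: gen_affine_on_const_infinity)
  next
    assume "\<forall>x. h x = -\<infinity>"
    then have "h = (\<lambda>_. -\<infinity>)"
      by auto
    then show ?thesis
      by (simp add: gen_affine_on_const_infinity)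
  next
    fix f
    assume "affine_fun f" "\<forall>x. h x = ereal (f x)"
    then have "h = (\<lambda>x. ereal (f x))"
      by auto
    then show ?thesis
      using \<open>affine_fun f\<close> by (simp add: gen_affine_on_ereal_iff)
  qed (use gen_affine_on_glue_hyperplane in blast)
qed

end
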